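(* Let $\mathfrak v_r$ be a $C(r)$-module and let $\mathfrak v_m$ be a $C(m)$-module with $m\equiv 0\pmod 4$ (both with compatible inner products). Then $\mathfrak v_m\otimes\mathfrak v_r$ is a $C(m+r)$-module with Clifford action $$J_{(z,w)}=J_z\otimes \mathrm{Id}+K_m\otimes J_w,\qquad (z,w)\in\mathbb R^m\times\mathbb R^r=\mathbb R^{m+r},$$ and the corresponding Lie algebra of Heisenberg type $(\mathfrak v_m\otimes\mathfrak v_r)\oplus(\mathbb R^m\times\mathbb R^r)$ has bracket $$[x\otimes u,\,y\otimes v]=\big(\langle u,v\rangle[x,y],\ \langle K_mx,y\rangle[u,v]\big),\qquad x,y\in\mathfrak v_m,\ u,v\in\mathfrak v_r .$$
   Context: $C(k)$ is the real Clifford algebra of $\mathbb R^k$ with relations $z^2=-\langle z,z\rangle 1$; a $C(k)$-module $\mathfrak w$ comes with an inner product for which each $J_z$ ($z\in\mathbb R^k$, acting on $\mathfrak w$) is skew-symmetric. The associated Lie algebra of Heisenberg type is $\mathfrak w\oplus\mathbb R^k$ with $\mathbb R^k$ central and bracket on $\mathfrak w$ given by $\langle z,[u,v]\rangle=\langle J_zu,v\rangle$. For a fixed orthonormal basis $z_1,\dots,z_m$ of $\mathbb R^m$, $K_m=J_{z_1}\cdots J_{z_m}$. The inner product on $\mathfrak v_m\otimes\mathfrak v_r$ is the tensor product inner product. *)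

theory Defs
  imports "HOL-Analysis.Analysis"
begin

text \<open>A C(k)-module structure on a real inner product space 'v (with compatible
inner product), where R^k is modelled by the euclidean space 'z:
z \<mapsto> J z is linear, each J z is linear and skew-symmetric, and J z \<circ> J z = - |z|^2 Id.\<close>
definition clifford_module :: "('z::real_inner \<Rightarrow> 'v::real_inner \<Rightarrow> 'v) \<Rightarrow> bool" where
  "clifford_module J \<longleftrightarrow>
     (\<forall>u. linear (\<lambda>z. J z u)) \<and>
     (\<forall>z. linear (J z)) \<and>
     (\<forall>z u v. inner (J z u) v = - inner u (J z v)) \<and>
     (\<forall>z u. J z (J z u) = - (inner z z) *\<^sub>R u)"

text \<open>The bracket of the associated Lie algebra of Heisenberg type, restricted to w:
[u,v] is the element of R^k with <z,[u,v]> = <J z u, v> for all z.\<close>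
definition htype_bracket :: "('z::real_inner \<Rightarrow> 'v::real_inner \<Rightarrow> 'v) \<Rightarrow> 'v \<Rightarrow> 'v \<Rightarrow> 'z" where
  "htype_bracket J u v = (THE c. \<forall>z. inner z c = inner (J z u) v)"

definition clifford_K :: "('z \<Rightarrow> 'v \<Rightarrow> 'v) \<Rightarrow> (nat \<Rightarrow> 'z) \<Rightarrow> nat \<Rightarrow> 'v \<Rightarrow> 'v" where
  "clifford_K J zs m = foldr (\<lambda>i f. J (zs i) \<circ> f) [0..<m] id"

definition orthonormal_list :: "(nat \<Rightarrow> 'z::real_inner) \<Rightarrow> nat \<Rightarrow> bool" where
  "orthonormal_list zs m \<longleftrightarrow> (\<forall>i<m. \<forall>j<m. inner (zs i) (zs j) = (if i = j then 1 else 0))"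

text \<open>Tensor product R^a \<otimes> R^b modelled as real^('a \<times> 'b); the standard inner
product there is the tensor product inner product.\<close>
definition tensor_vec :: "real^'a \<Rightarrow> real^'b \<Rightarrow> real^('a \<times> 'b)" where
  "tensor_vec x u = (\<chi> p. x $ fst p * u $ snd p)"

definition tensor_map ::
  "(real^'a \<Rightarrow> real^'a) \<Rightarrow> (real^'b \<Rightarrow> real^'b) \<Rightarrow> real^('a \<times> 'b) \<Rightarrow> real^('a \<times> 'b)" where
  "tensor_map f g X = (\<chi> p. \<Sum>q\<in>UNIV.
      f (axis (fst q) 1) $ fst p * g (axis (snd q) 1) $ snd p * X $ q)"

end

theory Submission
  imports Defs
begin

text \<open>Reversing the word z_1 \<dots> z_m costs the sign (-1)^(m(m-1)/2) and
each J_z is skew, so K is self-adjoint up to (-1)^(m(m+1)/2); moving a generator J_z through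
K costs (-1)^(m-1). For m divisible by 4, K is therefore a symmetric involution anticommuting
with every J_z. With these three facts the cross terms of
(J_z \<otimes> Id + K \<otimes> J_w)^2 cancel and the square is -(|z|^2 + |w|^2) Id, while skew-symmetry
only uses that J_z, J_w are skew and K is symmetric. The bracket is then read off on pure
tensors: <(z,w), [x \<otimes> u, y \<otimes> v]> = <J_z x, y><u, v> + <K x, y><J_w u, v>.\<close>

lemma clifford_module_linear_param: "clifford_module J \<Longrightarrow> linear (\<lambda>z. J z u)"
  by (simp add: clifford_module_def)

lemma clifford_module_linear: "clifford_module J \<Longrightarrow> linear (J z)"
  by (simp add: clifford_module_def)

lemma clifford_module_skew: "clifford_module J \<Longrightarrow> inner (J z u) v = - inner u (J z v)"
  by (simp add: clifford_module_def)

lemma clifford_module_square: "clifford_module J \<Longrightarrow> J z (J z u) = - (inner z z) *\<^sub>R u"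
  by (simp add: clifford_module_def)

lemma clifford_module_add_param: "clifford_module J \<Longrightarrow> J (a + b) = (\<lambda>u. J a u + J b u)"
  using linear_add[OF clifford_module_linear_param] by fastforce

lemma clifford_module_scale_param: "clifford_module J \<Longrightarrow> J (c *\<^sub>R a) = (\<lambda>u. c *\<^sub>R J a u)"
  using linear_scale[OF clifford_module_linear_param] by fastforce

lemma clifford_module_anticommute:
  assumes cm: "clifford_module J"
  shows "J a (J b u) + J b (J a u) = - (2 * inner a b) *\<^sub>R u"
proof -
  have "J (a + b) (J (a + b) u) = J a (J a u) + J a (J b u) + J b (J a u) + J b (J b u)"
    by (simp add: clifford_module_add_param[OF cm] linear_add[OF clifford_module_linear[OF cm]])
  moreover have "J (a + b) (J (a + b) u) = - (inner (a + b) (a + b)) *\<^sub>R u"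
    by (rule clifford_module_square[OF cm])
  ultimately show ?thesis
    by (simp add: clifford_module_square[OF cm] inner_commute algebra_simps)
qed

lemma orthonormal_listD:
  "orthonormal_list zs m \<Longrightarrow> i < m \<Longrightarrow> j < m \<Longrightarrow> inner (zs i) (zs j) = (if i = j then 1 else 0)"
  by (simp add: orthonormal_list_def)

lemma span_orthonormal_list:
  fixes zs :: "nat \<Rightarrow> 'z::euclidean_space"
  assumes on: "orthonormal_list zs DIM('z)"
  shows "span (zs ` {..<DIM('z)}) = UNIV"
proof -
  let ?S = "zs ` {..<DIM('z)}"
  have "inj_on zs {..<DIM('z)}"
    by (rule inj_onI) (metis lessThan_iff orthonormal_listD[OF on] zero_neq_one)
  then have card: "card ?S = dim (UNIV :: 'z set)"
    by (simp add: card_image)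
  have "pairwise orthogonal ?S"
    unfolding pairwise_def orthogonal_def using orthonormal_listD[OF on] by auto
  moreover have "0 \<notin> ?S"
    using orthonormal_listD[OF on] by fastforce
  ultimately have "independent ?S"
    by (rule pairwise_orthogonal_independent)
  then show ?thesis
    using card_eq_dim[of ?S UNIV] card by auto
qed

fun clifford_word :: "('z \<Rightarrow> 'v \<Rightarrow> 'v) \<Rightarrow> (nat \<Rightarrow> 'z) \<Rightarrow> nat list \<Rightarrow> 'v \<Rightarrow> 'v" where
  "clifford_word J zs [] u = u"
| "clifford_word J zs (i # l) u = J (zs i) (clifford_word J zs l u)"

lemma clifford_K_eq_word: "clifford_K J zs m = clifford_word J zs [0..<m]"
proof -
  have "foldr (\<lambda>i f. J (zs i) \<circ> f) l id = clifford_word J zs l" for l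
    by (induction l) (auto simp: fun_eq_iff)
  then show ?thesis
    by (simp add: clifford_K_def)
qed

lemma clifford_word_append:
  "clifford_word J zs (l1 @ l2) u = clifford_word J zs l1 (clifford_word J zs l2 u)"
  by (induction l1) auto

lemma linear_clifford_word:
  assumes cm: "clifford_module J"
  shows "linear (clifford_word J zs l)"
proof (induction l)
  case Nil
  show ?case
    by (simp add: linear_id[unfolded id_def])
next
  case (Cons i l)
  have "linear (J (zs i) \<circ> clifford_word J zs l)"
    by (rule linear_compose[OF Cons clifford_module_linear[OF cm]])
  then show ?case
    by (simp add: o_def)
qed

lemma clifford_word_commute:
  assumes cm: "clifford_module J" and on: "orthonormal_list zs m" and j: "j < m"
    and "distinct l" and "set l \<subseteq> {..<m}"
  shows "J (zs j) (clifford_word J zs l u)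
    = ((-1) ^ (length l + (if j \<in> set l then 1 else 0))) *\<^sub>R clifford_word J zs l (J (zs j) u)"
  using assms(4,5)
proof (induction l arbitrary: u)
  case Nil
  then show ?case by simp
next
  case (Cons i l)
  have i: "i < m"
    using Cons.prems by auto
  have IH: "J (zs j) (clifford_word J zs l v)
      = ((-1) ^ (length l + (if j \<in> set l then 1 else 0))) *\<^sub>R clifford_word J zs l (J (zs j) v)" for v
    using Cons by auto
  show ?case
  proof (cases "i = j")
    case True
    then have "j \<notin> set l"
      using Cons.prems by auto
    moreover have unit: "J (zs j) (J (zs j) v) = - v" for v
      using clifford_module_square[OF cm] orthonormal_listD[OF on j j] by simp
    ultimately show ?thesis
      using True IH[of "J (zs j) u"]
      by (simp add: unit linear_neg[OF linear_clifford_word[OF cm]])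
  next
    case False
    have "J (zs j) (J (zs i) v) = - J (zs i) (J (zs j) v)" for v
      using clifford_module_anticommute[OF cm, of "zs j" "zs i" v] orthonormal_listD[OF on j i] False
      by (simp add: eq_neg_iff_add_eq_0)
    then show ?thesis
      using False IH by (simp add: linear_scale[OF clifford_module_linear[OF cm]])
  qed
qed

lemma clifford_word_adjoint:
  assumes cm: "clifford_module J"
  shows "inner (clifford_word J zs l u) v = (-1) ^ length l * inner u (clifford_word J zs (rev l) v)"
proof (induction l arbitrary: v)
  case Nil
  then show ?case by simp
next
  case (Cons i l)
  have "inner (clifford_word J zs (i # l) u) v = - inner (clifford_word J zs l u) (J (zs i) v)"
    by (simp add: clifford_module_skew[OF cm])
  also have "\<dots> = - ((-1) ^ length l * inner u (clifford_word J zs (rev l) (J (zs i) v)))"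
    using Cons.IH by simp
  finally show ?case
    by (simp add: clifford_word_append)
qed

lemma triangular_number_Suc: "n * (n + 1) div 2 = n * (n - 1) div 2 + (n::nat)"
  by (induction n) (auto simp: algebra_simps)

lemma clifford_word_rev:
  assumes cm: "clifford_module J" and on: "orthonormal_list zs m"
    and "distinct l" and "set l \<subseteq> {..<m}"
  shows "clifford_word J zs (rev l) u
    = ((-1) ^ (length l * (length l - 1) div 2)) *\<^sub>R clifford_word J zs l u"
  using assms(3,4)
proof (induction l arbitrary: u)
  case Nil
  then show ?case by simp
next
  case (Cons i l)
  let ?n = "length l"
  have i: "i < m" and "i \<notin> set l"
    using Cons.prems by auto
  then have "clifford_word J zs (i # l) u = ((-1) ^ ?n) *\<^sub>R clifford_word J zs l (J (zs i) u)"
    using clifford_word_commute[OF cm on i, of l u] Cons.prems by simp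
  then have move: "clifford_word J zs l (J (zs i) u) = ((-1) ^ ?n) *\<^sub>R J (zs i) (clifford_word J zs l u)"
    by simp
  have "clifford_word J zs (rev (i # l)) u = clifford_word J zs (rev l) (J (zs i) u)"
    by (simp add: clifford_word_append)
  also have "\<dots> = ((-1) ^ (?n * (?n - 1) div 2)) *\<^sub>R clifford_word J zs l (J (zs i) u)"
    using Cons by auto
  also have "\<dots> = ((-1) ^ (?n * (?n - 1) div 2) * (-1) ^ ?n) *\<^sub>R clifford_word J zs (i # l) u"
    by (simp add: move)
  also have "(-1::real) ^ (?n * (?n - 1) div 2) * (-1) ^ ?n = (-1) ^ (?n * (?n + 1) div 2)"
    by (simp only: triangular_number_Suc power_add)
  finally show ?case
    by (simp add: mult.commute)
qed

lemma clifford_word_isometry: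
  assumes cm: "clifford_module J" and on: "orthonormal_list zs m" and "set l \<subseteq> {..<m}"
  shows "inner (clifford_word J zs l u) (clifford_word J zs l v) = inner u v"
  using assms(3)
proof (induction l)
  case Nil
  then show ?case by simp
next
  case (Cons i l)
  then have "inner (zs i) (zs i) = 1"
    using orthonormal_listD[OF on] by auto
  then show ?case
    using Cons by (simp add: clifford_module_skew[OF cm] clifford_module_square[OF cm])
qed

lemma linear_clifford_K: "clifford_module J \<Longrightarrow> linear (clifford_K J zs m)"
  unfolding clifford_K_eq_word by (rule linear_clifford_word)

lemma clifford_K_adjoint:
  assumes cm: "clifford_module J" and on: "orthonormal_list zs m"
  shows "inner (clifford_K J zs m u) v = (-1) ^ (m * (m + 1) div 2) * inner u (clifford_K J zs m v)"
proof -
  let ?l = "[0..<m]"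
  have "inner (clifford_K J zs m u) v = (-1) ^ m * inner u (clifford_word J zs (rev ?l) v)"
    using clifford_word_adjoint[OF cm] by (simp add: clifford_K_eq_word)
  also have "\<dots> = ((-1) ^ m * (-1) ^ (m * (m - 1) div 2)) * inner u (clifford_K J zs m v)"
    using clifford_word_rev[OF cm on, of ?l v] by (simp add: atLeast0LessThan clifford_K_eq_word)
  also have "(-1::real) ^ m * (-1) ^ (m * (m - 1) div 2) = (-1) ^ (m * (m + 1) div 2)"
    by (simp only: triangular_number_Suc power_add mult.commute)
  finally show ?thesis .
qed

lemma clifford_K_involution:
  assumes cm: "clifford_module J" and on: "orthonormal_list zs m"
  shows "clifford_K J zs m (clifford_K J zs m u) = (-1) ^ (m * (m + 1) div 2) *\<^sub>R u"
proof -
  let ?K = "clifford_K J zs m" and ?s = "(-1::real) ^ (m * (m + 1) div 2)"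
  have "inner v (?K (?K u)) = inner v (?s *\<^sub>R u)" for v
  proof -
    have "inner v (?K (?K u)) = (?s * ?s) * inner v (?K (?K u))"
      by (simp flip: power_mult_distrib)
    also have "\<dots> = ?s * inner (?K v) (?K u)"
      using clifford_K_adjoint[OF cm on, of v "?K u"] by simp
    also have "inner (?K v) (?K u) = inner v u"
      unfolding clifford_K_eq_word by (rule clifford_word_isometry[OF cm on]) auto
    finally show ?thesis
      by simp
  qed
  then show ?thesis
    using vector_eq_ldot by blast
qed

lemma clifford_K_anticommute:
  assumes cm: "clifford_module J" and on: "orthonormal_list zs m" and "even m"
    and z: "z \<in> span (zs ` {..<m})"
  shows "J z (clifford_K J zs m u) = - clifford_K J zs m (J z u)"
proof -
  let ?K = "clifford_K J zs m"
  have lin: "linear (\<lambda>z. - ?K (J z u))"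
    using linear_compose[OF clifford_module_linear_param[OF cm] linear_clifford_K[OF cm]]
    by (simp add: o_def linear_compose_neg)
  have basis: "J (zs j) (?K u) = - ?K (J (zs j) u)" if "j < m" for j
    using clifford_word_commute[OF cm on that, of "[0..<m]" u] that \<open>even m\<close>
    by (simp add: clifford_K_eq_word atLeast0LessThan)
  show ?thesis
    by (rule linear_eq_on_span[OF clifford_module_linear_param[OF cm] lin _ z]) (auto simp: basis)
qed

lemma inner_tensor_vec: "inner (tensor_vec x u) (tensor_vec y v) = inner x y * inner u v"
proof -
  have "inner (tensor_vec x u) (tensor_vec y v)
      = (\<Sum>i\<in>UNIV. \<Sum>j\<in>UNIV. (x $ i * y $ i) * (u $ j * v $ j))"
    by (simp add: inner_vec_def tensor_vec_def sum.cartesian_product split_def mult_ac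
        flip: UNIV_Times_UNIV)
  also have "\<dots> = inner x y * inner u v"
    by (simp add: inner_vec_def sum_product)
  finally show ?thesis .
qed

lemma tensor_vec_scaleR_left: "tensor_vec (c *\<^sub>R x) u = c *\<^sub>R tensor_vec x u"
  and tensor_vec_scaleR_right: "tensor_vec x (c *\<^sub>R u) = c *\<^sub>R tensor_vec x u"
  and tensor_vec_minus_left: "tensor_vec (- x) u = - tensor_vec x u"
  and tensor_vec_minus_right: "tensor_vec x (- u) = - tensor_vec x u"
  by (simp_all add: tensor_vec_def vec_eq_iff algebra_simps)

lemma axis_eq_tensor_vec: "axis p (1::real) = tensor_vec (axis (fst p) 1) (axis (snd p) 1)"
  by (cases p) (auto simp: tensor_vec_def vec_eq_iff axis_def)

lemma linear_component_expansion:
  fixes f :: "real^'n \<Rightarrow> real^'k"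
  assumes "linear f"
  shows "f x $ i = (\<Sum>j\<in>UNIV. x $ j * f (axis j 1) $ i)"
proof -
  have "f x = f (\<Sum>j\<in>UNIV. x $ j *\<^sub>R axis j 1)"
    using basis_expansion[of x] by (simp add: scalar_mult_eq_scaleR)
  also have "\<dots> = (\<Sum>j\<in>UNIV. x $ j *\<^sub>R f (axis j 1))"
    by (simp add: linear_sum[OF assms] linear_scale[OF assms])
  finally show ?thesis
    by simp
qed

lemma tensor_map_tensor_vec:
  assumes f: "linear f" and g: "linear g"
  shows "tensor_map f g (tensor_vec x u) = tensor_vec (f x) (g u)"
proof -
  have "tensor_map f g (tensor_vec x u) $ p
      = (\<Sum>i\<in>UNIV. \<Sum>j\<in>UNIV. (x $ i * f (axis i 1) $ fst p) * (u $ j * g (axis j 1) $ snd p))" for p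
    by (simp add: tensor_map_def tensor_vec_def sum.cartesian_product split_def mult_ac
        flip: UNIV_Times_UNIV)
  then show ?thesis
    by (simp add: vec_eq_iff sum_product tensor_vec_def
        linear_component_expansion[OF f, of x] linear_component_expansion[OF g, of u])
qed

lemma linear_tensor_map: "linear (tensor_map f g)"
  by (rule linearI)
    (simp_all add: tensor_map_def vec_eq_iff algebra_simps sum.distrib sum_distrib_left)

lemma tensor_map_add_left: "tensor_map (\<lambda>x. f1 x + f2 x) g X = tensor_map f1 g X + tensor_map f2 g X"
  and tensor_map_add_right: "tensor_map f (\<lambda>u. g1 u + g2 u) X = tensor_map f g1 X + tensor_map f g2 X"
  and tensor_map_scaleR_left: "tensor_map (\<lambda>x. c *\<^sub>R f x) g X = c *\<^sub>R tensor_map f g X"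
  and tensor_map_scaleR_right: "tensor_map f (\<lambda>u. c *\<^sub>R g u) X = c *\<^sub>R tensor_map f g X"
  by (simp_all add: tensor_map_def vec_eq_iff algebra_simps sum.distrib sum_distrib_left)

lemma linear_eq_axis:
  fixes f g :: "real^'n \<Rightarrow> 'b::real_vector"
  assumes "linear f" "linear g" "\<And>p. f (axis p 1) = g (axis p 1)"
  shows "f = g"
  using assms by (intro linear_eq_stdbasis) (auto simp: Basis_vec_def)

lemma skew_if_skew_on_axis:
  fixes T :: "real^'n \<Rightarrow> real^'n"
  assumes T: "linear T"
    and skew: "\<And>p q. inner (T (axis p 1)) (axis q 1) = - inner (axis p 1) (T (axis q 1))"
  shows "inner (T x) y = - inner x (T y)"
proof -
  have "(\<lambda>x. inner (T x) (axis q 1)) = (\<lambda>x. - inner x (T (axis q 1)))" for q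
    by (rule linear_eq_axis)
      (auto intro!: linearI simp: linear_add[OF T] linear_scale[OF T] inner_add_left skew)
  then have "(\<lambda>y. inner (T x) y) = (\<lambda>y. - inner x (T y))"
    by (intro linear_eq_axis)
      (auto intro!: linearI simp: linear_add[OF T] linear_scale[OF T] inner_add_right fun_eq_iff)
  then show ?thesis
    by metis
qed

lemma htype_bracket_eqI:
  assumes "\<And>z. inner z c = inner (J z u) v"
  shows "htype_bracket J u v = c"
  unfolding htype_bracket_def
proof (rule the_equality)
  fix c' assume "\<forall>z. inner z c' = inner (J z u) v"
  then have "inner (c' - c) (c' - c) = 0"
    using assms by (simp add: inner_diff)
  then show "c' = c" by simp
qed (use assms in auto)

lemma inner_htype_bracket:
  fixes J :: "'z::euclidean_space \<Rightarrow> 'v::real_inner \<Rightarrow> 'v"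
  assumes lin: "linear (\<lambda>z. J z u)"
  shows "inner z (htype_bracket J u v) = inner (J z u) v"
proof -
  let ?c = "\<Sum>b\<in>Basis. inner (J b u) v *\<^sub>R b"
  have c: "inner z ?c = inner (J z u) v" for z
  proof -
    have "J z u = J (\<Sum>b\<in>Basis. inner z b *\<^sub>R b) u"
      by (simp add: euclidean_representation)
    also have "\<dots> = (\<Sum>b\<in>Basis. inner z b *\<^sub>R J b u)"
      using linear_sum[OF lin, of "\<lambda>b. inner z b *\<^sub>R b" Basis] linear_scale[OF lin] by simp
    finally show ?thesis
      by (simp add: inner_sum_right inner_sum_left mult.commute)
  qed
  then have "htype_bracket J u v = ?c"
    by (rule htype_bracket_eqI)
  then show ?thesis
    using c by simp
qed

definition tensor_clifford ::
  "('z \<Rightarrow> real^'a \<Rightarrow> real^'a) \<Rightarrow> (real^'a \<Rightarrow> real^'a) \<Rightarrow> ('w \<Rightarrow> real^'b \<Rightarrow> real^'b)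
    \<Rightarrow> 'z \<times> 'w \<Rightarrow> real^('a \<times> 'b) \<Rightarrow> real^('a \<times> 'b)" where
  "tensor_clifford Jm K Jr = (\<lambda>(z, w). \<lambda>X. tensor_map (Jm z) id X + tensor_map K (Jr w) X)"

lemma tensor_clifford_apply:
  "tensor_clifford Jm K Jr (z, w) X = tensor_map (Jm z) id X + tensor_map K (Jr w) X"
  by (simp add: tensor_clifford_def)

lemma linear_tensor_clifford: "linear (tensor_clifford Jm K Jr zw)"
  by (cases zw) (simp add: tensor_clifford_def linear_compose_add linear_tensor_map)

lemma tensor_clifford_tensor_vec:
  assumes "clifford_module Jm" "clifford_module Jr" "linear K"
  shows "tensor_clifford Jm K Jr (z, w) (tensor_vec x u)
    = tensor_vec (Jm z x) u + tensor_vec (K x) (Jr w u)"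
  using assms
  by (simp add: tensor_clifford_apply tensor_map_tensor_vec clifford_module_linear linear_id)

lemma clifford_module_tensor_clifford:
  assumes cm: "clifford_module Jm" and cr: "clifford_module Jr" and K: "linear K"
    and K_sym: "\<And>x y. inner (K x) y = inner x (K y)"
    and K_inv: "\<And>x. K (K x) = x"
    and K_anti: "\<And>z x. Jm z (K x) = - K (Jm z x)"
  shows "clifford_module (tensor_clifford Jm K Jr)"
proof -
  let ?J = "tensor_clifford Jm K Jr"
  have param: "linear (\<lambda>zw. ?J zw X)" for X
    by (rule linearI)
      (auto simp: tensor_clifford_def clifford_module_add_param[OF cm] clifford_module_add_param[OF cr]
        clifford_module_scale_param[OF cm] clifford_module_scale_param[OF cr] tensor_map_add_left
        tensor_map_add_right tensor_map_scaleR_left tensor_map_scaleR_right algebra_simps)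
  have skew: "inner (?J zw X) Y = - inner X (?J zw Y)" for zw X Y
  proof (cases zw)
    case (Pair z w)
    show ?thesis
    proof (rule skew_if_skew_on_axis[OF linear_tensor_clifford])
      show "inner (?J zw (axis p 1)) (axis q 1) = - inner (axis p 1) (?J zw (axis q 1))" for p q
        by (simp add: Pair axis_eq_tensor_vec[of p] axis_eq_tensor_vec[of q]
            tensor_clifford_tensor_vec[OF cm cr K] inner_add_left inner_add_right inner_tensor_vec
            clifford_module_skew[OF cm] clifford_module_skew[OF cr] K_sym)
    qed
  qed
  have square: "?J zw (?J zw X) = - (inner zw zw) *\<^sub>R X" for zw X
  proof (cases zw)
    case (Pair z w)
    have "(\<lambda>X. ?J zw (?J zw X)) = (\<lambda>X. - (inner zw zw) *\<^sub>R X)"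
    proof (rule linear_eq_axis)
      show "linear (\<lambda>X. ?J zw (?J zw X))"
        using linear_compose[OF linear_tensor_clifford linear_tensor_clifford] by (simp add: o_def)
      show "linear (\<lambda>X. - (inner zw zw) *\<^sub>R X)"
        by (rule linear_scaleR)
      show "?J zw (?J zw (axis p 1)) = - (inner zw zw) *\<^sub>R axis p 1" for p
        by (simp add: Pair axis_eq_tensor_vec[of p] tensor_clifford_tensor_vec[OF cm cr K]
            linear_add[OF linear_tensor_clifford] clifford_module_square[OF cm]
            clifford_module_square[OF cr] K_anti K_inv tensor_vec_scaleR_left
            tensor_vec_scaleR_right tensor_vec_minus_left tensor_vec_minus_right algebra_simps)
    qed
    then show ?thesis
      by metis
  qed
  show ?thesis
    unfolding clifford_module_def using param linear_tensor_clifford skew square by blast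
qed

lemma htype_bracket_tensor_clifford:
  fixes Jm :: "'z::euclidean_space \<Rightarrow> real^'a \<Rightarrow> real^'a"
    and Jr :: "'w::euclidean_space \<Rightarrow> real^'b \<Rightarrow> real^'b"
  assumes cm: "clifford_module Jm" and cr: "clifford_module Jr" and K: "linear K"
  shows "htype_bracket (tensor_clifford Jm K Jr) (tensor_vec x u) (tensor_vec y v)
    = (inner u v *\<^sub>R htype_bracket Jm x y, inner (K x) y *\<^sub>R htype_bracket Jr u v)"
proof (rule htype_bracket_eqI)
  fix zw :: "'z \<times> 'w"
  show "inner zw (inner u v *\<^sub>R htype_bracket Jm x y, inner (K x) y *\<^sub>R htype_bracket Jr u v)
      = inner (tensor_clifford Jm K Jr zw (tensor_vec x u)) (tensor_vec y v)"
    by (cases zw)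
      (simp add: tensor_clifford_tensor_vec[OF cm cr K] inner_add_left inner_tensor_vec mult.commute
        inner_htype_bracket[OF clifford_module_linear_param[OF cm]]
        inner_htype_bracket[OF clifford_module_linear_param[OF cr]])
qed

theorem proposition4p3:
  fixes Jm :: "real^'m \<Rightarrow> real^'a \<Rightarrow> real^'a"
    and Jr :: "real^'r \<Rightarrow> real^'b \<Rightarrow> real^'b"
    and zs :: "nat \<Rightarrow> real^'m"
  assumes "clifford_module Jm"
    and "clifford_module Jr"
    and "CARD('m) mod 4 = 0"
    and "orthonormal_list zs CARD('m)"
  shows
    "clifford_module (\<lambda>(z, w). \<lambda>X. tensor_map (Jm z) id X
                               + tensor_map (clifford_K Jm zs CARD('m)) (Jr w) X)
     \<and> (\<forall>x y u v.
          htype_bracket (\<lambda>(z, w). \<lambda>X. tensor_map (Jm z) id X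
                               + tensor_map (clifford_K Jm zs CARD('m)) (Jr w) X)
             (tensor_vec x u) (tensor_vec y v)
          = (inner u v *\<^sub>R htype_bracket Jm x y,
             inner (clifford_K Jm zs CARD('m) x) y *\<^sub>R htype_bracket Jr u v))"
proof -
  note cm = assms(1) and cr = assms(2) and on = assms(4)
  let ?m = "CARD('m)"
  let ?K = "clifford_K Jm zs ?m"
  obtain k where "?m = 4 * k"
    using assms(3) by auto
  then have "even ?m" and sign: "(-1::real) ^ (?m * (?m + 1) div 2) = 1"
    by simp_all
  have K: "linear ?K"
    by (rule linear_clifford_K[OF cm])
  have "inner (?K x) y = inner x (?K y)" for x y
    using clifford_K_adjoint[OF cm on] sign by simp
  moreover have "?K (?K x) = x" for x
    using clifford_K_involution[OF cm on] sign by simp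
  moreover have "Jm z (?K x) = - ?K (Jm z x)" for z x
    using clifford_K_anticommute[OF cm on \<open>even ?m\<close>] span_orthonormal_list[of zs] on by simp
  ultimately have "clifford_module (tensor_clifford Jm ?K Jr)"
    by (rule clifford_module_tensor_clifford[OF cm cr K])
  then show ?thesis
    using htype_bracket_tensor_clifford[OF cm cr K] by (simp add: tensor_clifford_def)
qed

end
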